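(* Let $p$ be an odd prime with $p\equiv 1\pmod 8$. Then there exists a perfect $B[-1,3](p)$ set if and only if the multiplicative order $o(-\tfrac32)$ of $-3\cdot 2^{-1}\bmod p$ in $\mathbb{Z}_p^\ast$ is odd and $4$ divides the multiplicative order $o(2)$ of $2$ in $\mathbb{Z}_p^\ast$.
   Context: $\mathbb{Z}_p^\ast$ is the multiplicative group of nonzero residues modulo $p$, and $o(x)$ denotes the order of $x$ in this group. A set $B\subseteq\mathbb{Z}_p$ is a perfect $B[-1,3](p)$ set if every nonzero element of $\mathbb{Z}_p$ has a unique representation $ab \bmod p$ with $a\in\{-1,1,2,3\}$ and $b\in B$ (and $0$ has no such representation); equivalently $B\subseteq\mathbb{Z}_p^\ast$, $|B|=(p-1)/4$, and the sets $\{-b,b,2b,3b\}$, $b\in B$, partition $\mathbb{Z}_p^\ast$. *)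

theory Defs
  imports "HOL-Number_Theory.Number_Theory"
begin

text \<open>Residues of Z_p are represented by the integers 0,...,p-1.
  The multiplier set A = {-1,1,2,3} is taken as a set of integers and products
  are compared modulo p.\<close>

definition perfect_B_m1_3 :: "nat \<Rightarrow> int set \<Rightarrow> bool" where
  "perfect_B_m1_3 p B \<longleftrightarrow>
     B \<subseteq> {0..<int p} \<and>
     (\<forall>x\<in>{1..<int p}. \<exists>!ab. fst ab \<in> {-1,1,2,3} \<and> snd ab \<in> B \<and>
                                   [fst ab * snd ab = x] (mod int p)) \<and>
     (\<forall>a\<in>{-1,1,2,3}. \<forall>b\<in>B. \<not> [a * b = 0] (mod int p))"

definition minus_three_halves :: "nat \<Rightarrow> nat" where
  "minus_three_halves p = (THE c. c < p \<and> [2 * int c = -3] (mod int p))"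

end

theory Submission
  imports Defs
begin

text \<open>Fix a primitive root \<open>g\<close> modulo \<open>p\<close> and write \<open>p - 1 = 2^e m\<close> with \<open>m\<close> odd. Put
  \<open>c = -3/2\<close>. A perfect set \<open>B\<close> is closed under multiplication by \<open>c\<close>, because the block
  \<open>{-b', b', 2b', 3b'}\<close> containing \<open>-3b\<close> must be the one with \<open>b' = cb\<close>; so if \<open>o(c)\<close> were
  even, \<open>c^(o(c)/2) = -1\<close> would put both \<open>b\<close> and \<open>-b\<close> into \<open>B\<close>. If \<open>4\<close> did not divide \<open>o(2)\<close>,
  the subgroup of order \<open>2m\<close> would contain \<open>-1\<close>, \<open>2\<close>, \<open>c\<close> and hence \<open>3 = -2c\<close>, so it would
  be a union of blocks and \<open>4\<close> would divide \<open>2m\<close>.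

  Conversely, in discrete logarithms \<open>-1\<close>, \<open>2\<close>, \<open>c\<close> are \<open>2^(e-1) m\<close>, \<open>2^s u\<close> with \<open>u\<close> odd and
  \<open>s \<le> e - 2\<close> (as \<open>4\<close> divides \<open>o(2)\<close>), and a multiple of \<open>2^e\<close> (as \<open>o(c)\<close> is odd), and the
  logarithm of \<open>3\<close> is their sum. Modulo \<open>2^e\<close>, the four shifts flip the binary digits of
  positions \<open>s\<close> and \<open>e - 1\<close> in four different ways, so the powers \<open>g^k\<close> for which both digits
  of \<open>k\<close> vanish form a perfect set.\<close>

section \<open>Binary digits\<close>

lemma bit_add_pow2_mult_iff:
  fixes k w :: int
  shows "bit (k + 2 ^ n * w) n \<longleftrightarrow> bit k n \<noteq> odd w"
proof -
  have "(k + 2 ^ n * w) div 2 ^ n = k div 2 ^ n + w" by simp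
  then show ?thesis by (auto simp: bit_iff_odd)
qed

lemma bit_cong_pow2:
  fixes k k' :: int
  assumes "[k = k'] (mod 2 ^ n)" "i < n"
  shows "bit k i \<longleftrightarrow> bit k' i"
proof -
  have "take_bit n k = take_bit n k'" using assms(1) by (simp add: take_bit_eq_mod cong_def)
  then show ?thesis using assms(2) by (metis bit_take_bit_iff)
qed

lemma bit_add_pow2_mult_low:
  fixes k w :: int
  assumes "i < n"
  shows "bit (k + 2 ^ n * w) i \<longleftrightarrow> bit k i"
  by (rule bit_cong_pow2[OF _ assms]) (simp add: cong_iff_dvd_diff)

lemma ex1_shift_bits_clear:
  fixes K u w v :: int
  assumes "s < l" "odd u" "odd w"
  shows "\<exists>!d \<in> {0, 2 ^ l * w, 2 ^ s * u, 2 ^ s * u + 2 ^ l * w + 2 ^ Suc l * v}.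
           \<not> bit (K - d) s \<and> \<not> bit (K - d) l"
proof -
  define K' where "K' = K + 2 ^ s * (-u)"
  define K'' where "K'' = K' + 2 ^ Suc l * (-v)"
  have "odd (-u)" "odd (-w)" "s < Suc l" "l < Suc l" using assms by simp_all
  have b1: "bit (K - 2 ^ l * w) s \<longleftrightarrow> bit K s" "bit (K - 2 ^ l * w) l \<longleftrightarrow> \<not> bit K l"
    using bit_add_pow2_mult_low[OF assms(1), of K "-w"] bit_add_pow2_mult_iff[of K l "-w"] \<open>odd (-w)\<close>
    by simp_all
  have b2: "bit (K - 2 ^ s * u) s \<longleftrightarrow> \<not> bit K s" "K - 2 ^ s * u = K'"
    using bit_add_pow2_mult_iff[of K s "-u"] \<open>odd (-u)\<close> by (simp_all add: K'_def)
  have eq3: "K - (2 ^ s * u + 2 ^ l * w + 2 ^ Suc l * v) = K'' - 2 ^ l * w"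
    by (simp add: K'_def K''_def algebra_simps)
  have "bit K'' s \<longleftrightarrow> bit K' s" "bit K'' l \<longleftrightarrow> bit K' l"
    unfolding K''_def using bit_add_pow2_mult_low \<open>s < Suc l\<close> \<open>l < Suc l\<close> by blast+
  then have b3: "bit (K - (2 ^ s * u + 2 ^ l * w + 2 ^ Suc l * v)) s \<longleftrightarrow> bit K' s"
      "bit (K - (2 ^ s * u + 2 ^ l * w + 2 ^ Suc l * v)) l \<longleftrightarrow> \<not> bit K' l"
    unfolding eq3
    using bit_add_pow2_mult_low[OF assms(1), of K'' "-w"] bit_add_pow2_mult_iff[of K'' l "-w"] \<open>odd (-w)\<close>
    by simp_all
  define D where "D = {0, 2 ^ l * w, 2 ^ s * u, 2 ^ s * u + 2 ^ l * w + 2 ^ Suc l * v :: int}"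
  define P where "P d \<longleftrightarrow> \<not> bit (K - d) s \<and> \<not> bit (K - d) l" for d
  have "\<exists>d\<in>D. P d"
    using b1 b2 b3 unfolding D_def P_def by (cases "bit K s") auto
  moreover have "d = d'" if "d \<in> D" "d' \<in> D" "P d" "P d'" for d d'
    using that b1 b2 b3 unfolding D_def P_def by auto
  ultimately show ?thesis unfolding D_def P_def by blast
qed

section \<open>Residues, orders and primitive roots\<close>

lemma pow2_times_odd_decomp:
  fixes n :: nat
  assumes "n > 0"
  obtains e m where "n = 2 ^ e * m" "odd m"
proof -
  obtain m where "n = 2 ^ multiplicity 2 n * m" "\<not> 2 dvd m"
    using multiplicity_decompose'[of n 2] assms by auto
  then show ?thesis by (intro that) auto
qed

lemma dvd_pow2_times_odd_imp_dvd_double: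
  fixes r m :: nat
  assumes "odd m" "r dvd 2 ^ e * m" "\<not> 4 dvd r"
  shows "r dvd 2 * m"
proof (cases "odd r")
  case True
  then have "r dvd m" using assms(2) coprime_dvd_mult_right_iff[of r "2 ^ e" m] by simp
  then show ?thesis by simp
next
  case False
  then obtain r' where r: "r = 2 * r'" by blast
  with assms(3) have "odd r'" by auto
  moreover have "r' dvd 2 ^ e * m" using assms(2) unfolding r by (rule dvd_mult_right)
  ultimately have "r' dvd m" using coprime_dvd_mult_right_iff[of r' "2 ^ e" m] by simp
  then show ?thesis using r by simp
qed

lemma cong_of_nat_pow_eq_1_iff:
  fixes a m :: nat
  shows "[int a ^ n = 1] (mod int m) \<longleftrightarrow> [a ^ n = 1] (mod m)"
  by (metis cong_int_iff of_nat_1 of_nat_power)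

lemma mod_mem_nonzero_residues:
  fixes x :: int
  assumes "p > 0" "\<not> int p dvd x"
  shows "x mod int p \<in> {1..<int p}"
proof -
  have "0 \<le> x mod int p" "x mod int p < int p" using assms(1) by simp_all
  moreover have "x mod int p \<noteq> 0" using assms(2) by (simp add: dvd_eq_mod_eq_0)
  ultimately show ?thesis by simp
qed

lemma mult_mod_mem_nonzero_residues:
  fixes a x :: int
  assumes "prime p" "\<not> int p dvd a" "x \<in> {1..<int p}"
  shows "a * x mod int p \<in> {1..<int p}"
proof -
  have "\<not> int p dvd x" using assms(3) zdvd_not_zless[of x "int p"] by auto
  then have "\<not> int p dvd a * x" using assms(1,2) by (simp add: prime_dvd_mult_iff)
  then show ?thesis using assms(1) prime_gt_0_nat by (intro mod_mem_nonzero_residues) auto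
qed

lemma roots_of_unity_mult_mod_iff:
  fixes a x :: int
  assumes "[a ^ d = 1] (mod int p)"
  shows "[(a * x mod int p) ^ d = 1] (mod int p) \<longleftrightarrow> [x ^ d = 1] (mod int p)"
proof -
  have "[(a * x mod int p) ^ d = a ^ d * x ^ d] (mod int p)"
    by (simp add: cong_def power_mod power_mult_distrib)
  also have "[a ^ d * x ^ d = 1 * x ^ d] (mod int p)" using assms cong_refl by (rule cong_mult)
  also have "1 * x ^ d = x ^ d" by simp
  finally have eq: "[(a * x mod int p) ^ d = x ^ d] (mod int p)" .
  show ?thesis using cong_trans[OF cong_sym[OF eq]] cong_trans[OF eq] by blast
qed

lemma ord_dvd_prime_minus_1:
  fixes p a :: nat
  assumes "prime p" "\<not> p dvd a"
  shows "ord p a dvd p - 1"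
  using fermat_theorem[OF assms] by (simp add: ord_divides')

lemma ord_dvd_odd_part:
  fixes p a :: nat
  assumes "prime p" "\<not> p dvd a" "p - 1 = 2 ^ e * m" "odd (ord p a)"
  shows "ord p a dvd m"
proof -
  have "ord p a dvd 2 ^ e * m" using ord_dvd_prime_minus_1[OF assms(1,2)] assms(3) by simp
  then show ?thesis using assms(4) coprime_dvd_mult_right_iff[of "ord p a" "2 ^ e" m] by simp
qed

context
  fixes p g :: nat
  assumes prime_p: "prime p" and primroot_g: "residue_primroot p g"
begin

lemma primroot_pow_cong_iff: "[int g ^ i = int g ^ j] (mod int p) \<longleftrightarrow> [i = j] (mod (p - 1))"
proof -
  have "coprime p g" "ord p g = p - 1"
    using primroot_g prime_p by (simp_all add: residue_primroot_def totient_prime)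
  then show ?thesis by (metis cong_int_iff of_nat_power order_divides_expdiff)
qed

lemma primroot_pow_pow_eq_1_iff: "[(int g ^ k) ^ n = 1] (mod int p) \<longleftrightarrow> p - 1 dvd k * n"
  using primroot_pow_cong_iff[of "k * n" 0] by (simp add: power_mult cong_0_iff)

lemma primroot_pow_not_dvd: "\<not> int p dvd int g ^ k"
proof -
  have "coprime p (g ^ k)" using primroot_g by (simp add: residue_primroot_def)
  then have "\<not> p dvd g ^ k" using prime_p by (metis coprime_absorb_left not_prime_unit)
  then show ?thesis by (metis of_nat_dvd_iff of_nat_power)
qed

lemma primroot_log_exists:
  assumes "\<not> int p dvd x"
  obtains k where "[int g ^ k = x] (mod int p)"
proof -
  have p1: "p > 1" using prime_p prime_gt_1_nat by blast
  define y where "y = nat (x mod int p)"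
  have y: "int y = x mod int p" "y < p" unfolding y_def using p1 by (auto simp: nat_less_iff)
  have "y \<noteq> 0" using y(1) assms by (auto simp: dvd_eq_mod_eq_0)
  then have "\<not> p dvd y" using y(2) by (auto dest: dvd_imp_le)
  then have "coprime y p" using prime_p prime_imp_coprime_nat coprime_commute by blast
  then have "y \<in> totatives p" using y(2) \<open>y \<noteq> 0\<close> by (auto simp: totatives_def)
  then have "y \<in> (\<lambda>i. g ^ i mod p) ` {..<totient p}"
    using residue_primroot_is_generator[OF p1 primroot_g] unfolding bij_betw_def by simp
  then obtain k where "g ^ k mod p = y" by blast
  then have "int g ^ k mod int p = x mod int p" using y(1) by (simp flip: of_nat_power of_nat_mod)
  then have "[int g ^ k = x] (mod int p)" by (simp add: cong_def)
  then show ?thesis by (rule that)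
qed

lemma primroot_pow_half_cong_minus_1:
  assumes "odd p"
  shows "[int g ^ ((p - 1) div 2) = -1] (mod int p)"
proof -
  define h where "h = (p - 1) div 2"
  have p1: "p - 1 = h * 2" "h > 0"
    unfolding h_def using assms prime_p prime_ge_2_nat[of p] by presburger+
  have "[(int g ^ h) * (int g ^ h) = 1] (mod int p)"
    using primroot_pow_pow_eq_1_iff[of h 2] p1(1) by (simp add: power2_eq_square)
  moreover have "\<not> [int g ^ h = 1] (mod int p)"
    using primroot_pow_pow_eq_1_iff[of h 1] p1 by (auto dest: dvd_imp_le)
  moreover have "int g ^ h > 0"
    using primroot_g prime_p prime_gt_1_nat[of p] by (cases "g = 0") auto
  ultimately show ?thesis
    using cong_square[of "int p" "int g ^ h"] prime_p unfolding h_def by auto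
qed

lemma card_roots_of_unity:
  assumes "d dvd p - 1"
  shows "card {x \<in> {1..<int p}. [x ^ d = 1] (mod int p)} = d"
proof -
  have p1: "p > 1" using prime_p prime_gt_1_nat by blast
  define H where "H = (p - 1) div d"
  have pH: "p - 1 = H * d" using assms unfolding H_def by simp
  then have "H > 0" "d > 0" using p1 by (auto intro!: gr0I)
  define f where "f k = int g ^ (H * k) mod int p" for k
  have "inj_on f {..<d}"
  proof
    fix k l assume kl: "k \<in> {..<d}" "l \<in> {..<d}" "f k = f l"
    then have "[H * k = H * l] (mod (p - 1))"
      using primroot_pow_cong_iff by (simp add: f_def cong_def)
    moreover have "H * k < p - 1" "H * l < p - 1" using kl pH \<open>H > 0\<close> by auto
    ultimately have "H * k = H * l" using cong_less_imp_eq_nat by blast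
    then show "k = l" using \<open>H > 0\<close> by simp
  qed
  moreover have "f ` {..<d} = {x \<in> {1..<int p}. [x ^ d = 1] (mod int p)}"
  proof (intro equalityI subsetI)
    fix x assume "x \<in> f ` {..<d}"
    then obtain k where x: "x = int g ^ (H * k) mod int p" unfolding f_def by blast
    have "[(int g ^ (H * k)) ^ d = 1] (mod int p)"
      using primroot_pow_pow_eq_1_iff pH by (simp add: mult.commute mult.left_commute)
    then have "[x ^ d = 1] (mod int p)" unfolding x by (simp add: cong_def power_mod)
    moreover have "x \<noteq> 0" using primroot_pow_not_dvd unfolding x by (auto simp: dvd_eq_mod_eq_0)
    moreover have "0 \<le> x" "x < int p" unfolding x using p1 by simp_all
    ultimately show "x \<in> {x \<in> {1..<int p}. [x ^ d = 1] (mod int p)}" by auto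
  next
    fix x assume x: "x \<in> {x \<in> {1..<int p}. [x ^ d = 1] (mod int p)}"
    then have "\<not> int p dvd x" by (auto dest: zdvd_imp_le)
    then obtain j where j: "[int g ^ j = x] (mod int p)" by (rule primroot_log_exists)
    define j' where "j' = j mod (p - 1)"
    have j': "[int g ^ j' = x] (mod int p)" "j' < p - 1"
      using j primroot_pow_cong_iff[of j' j] p1 by (auto simp: j'_def cong_def)
    have "[(int g ^ j') ^ d = x ^ d] (mod int p)" using j'(1) by (rule cong_pow)
    then have "[(int g ^ j') ^ d = 1] (mod int p)" using x cong_trans by blast
    then have "H * d dvd j' * d" using primroot_pow_pow_eq_1_iff pH by simp
    then have "H dvd j'" using \<open>d > 0\<close> by simp
    then obtain k where k: "j' = H * k" by (rule dvdE)
    then have "H * k < H * d" using j'(2) pH by simp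
    then have "k < d" by simp
    moreover have "f k = x" using j'(1) x unfolding k f_def by (simp add: cong_def)
    ultimately show "x \<in> f ` {..<d}" by blast
  qed
  ultimately show ?thesis using card_image by fastforce
qed

lemma primroot_log_dvd_if_odd_ord:
  assumes pm: "p - 1 = 2 ^ e * m" "odd m"
    and k: "[int g ^ k = int a] (mod int p)" and odd_ord: "odd (ord p a)"
  shows "2 ^ e dvd k"
proof -
  have "\<not> p dvd a"
  proof
    assume "p dvd a"
    then have "[int g ^ k = 0] (mod int p)" using k by (simp add: cong_0_iff cong_dvd_iff)
    then show False using primroot_pow_not_dvd by (simp add: cong_0_iff)
  qed
  then have "ord p a dvd m" using ord_dvd_odd_part[OF prime_p _ pm(1) odd_ord] by blast
  then have "[int a ^ m = 1] (mod int p)" by (simp add: cong_of_nat_pow_eq_1_iff ord_divides')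
  then have "[(int g ^ k) ^ m = 1] (mod int p)" using cong_pow[OF k] cong_trans by blast
  then have "2 ^ e * m dvd k * m" using primroot_pow_pow_eq_1_iff pm(1) by simp
  then show ?thesis using pm(2) by (auto intro: gr0I)
qed

lemma primroot_log_not_dvd_if_4_dvd_ord:
  assumes pm: "p - 1 = 2 ^ e * m" "odd m"
    and k: "[int g ^ k = int a] (mod int p)" and four_dvd: "4 dvd ord p a"
  shows "\<not> 2 ^ (e - 1) dvd k"
proof
  assume "2 ^ (e - 1) dvd k"
  then obtain t where t: "k = 2 ^ (e - 1) * t" ..
  have "2 ^ e dvd (2 :: nat) ^ (e - 1) * 2" by (cases e) simp_all
  then have "2 ^ e * m dvd (2 ^ (e - 1) * 2) * (m * t)" by (rule mult_dvd_mono) simp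
  then have "p - 1 dvd k * (2 * m)" unfolding pm(1) t by (simp add: ac_simps)
  then have "[(int g ^ k) ^ (2 * m) = 1] (mod int p)" using primroot_pow_pow_eq_1_iff by blast
  then have "[int a ^ (2 * m) = 1] (mod int p)" using cong_pow[OF k] cong_sym cong_trans by blast
  then have "ord p a dvd 2 * m" by (simp add: cong_of_nat_pow_eq_1_iff ord_divides')
  with four_dvd have "4 dvd 2 * m" by (rule dvd_trans)
  then show False using pm(2) by presburger
qed

end

section \<open>Perfect sets\<close>

lemma minus_three_halves_eq:
  assumes "odd p" "p \<ge> 3"
  shows "minus_three_halves p = (p - 3) div 2"
  unfolding minus_three_halves_def
proof (rule the_equality)
  have "2 * ((p - 3) div 2) = p - 3" using assms by presburger
  then have "2 * int ((p - 3) div 2) = int p - 3" using assms(2) by linarith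
  then have c: "[2 * int ((p - 3) div 2) = - 3] (mod int p)" by (simp add: cong_iff_dvd_diff)
  then show "(p - 3) div 2 < p \<and> [2 * int ((p - 3) div 2) = - 3] (mod int p)"
    using assms(2) by simp
  fix c' assume c': "c' < p \<and> [2 * int c' = - 3] (mod int p)"
  then have "[2 * int c' = 2 * int ((p - 3) div 2)] (mod int p)"
    using c by (meson cong_sym cong_trans)
  then have "[int c' = int ((p - 3) div 2)] (mod int p)"
    using assms(1) by (simp add: cong_mult_lcancel)
  then have "[c' = (p - 3) div 2] (mod p)" by (simp add: cong_int_iff)
  moreover have "(p - 3) div 2 < p" using assms(2) by simp
  ultimately show "c' = (p - 3) div 2" using c' cong_less_imp_eq_nat by blast
qed

lemma minus_three_halves_cong:
  assumes "odd p" "p \<ge> 3"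
  shows "[2 * int (minus_three_halves p) = -3] (mod int p)"
proof -
  have "2 * ((p - 3) div 2) = p - 3" using assms by presburger
  then have "2 * int ((p - 3) div 2) = int p - 3" using assms(2) by linarith
  then show ?thesis by (simp add: minus_three_halves_eq[OF assms] cong_iff_dvd_diff)
qed

lemma minus_three_halves_not_dvd:
  assumes "odd p" "p > 3"
  shows "\<not> p dvd minus_three_halves p"
proof -
  have "minus_three_halves p = (p - 3) div 2" using assms by (intro minus_three_halves_eq) auto
  moreover have "0 < (p - 3) div 2" "(p - 3) div 2 < p" using assms by presburger+
  ultimately show ?thesis by (simp add: nat_dvd_not_less)
qed

lemma three_cong_minus_three_halves:
  assumes "odd p" "p \<ge> 3"
  shows "[3 = -1 * 2 * int (minus_three_halves p)] (mod int p)"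
  using minus_three_halves_cong[OF assms] cong_minus_minus_iff cong_sym by fastforce

lemma multiplier_not_dvd:
  assumes "p > 3" "a \<in> {-1, 1, 2, 3 :: int}"
  shows "\<not> int p dvd a"
  using assms by (auto dest: zdvd_imp_le)

lemma multiplier_cong_imp_eq:
  assumes "p > 4" "a \<in> {-1, 1, 2, 3 :: int}" "a' \<in> {-1, 1, 2, 3}" "[a = a'] (mod int p)"
  shows "a = a'"
  using assms by (auto simp: cong_iff_dvd_diff zdvd_not_zless)

lemma multiplier_pow_eq_1:
  assumes "odd p" "p \<ge> 3" "even n"
    and two: "[2 ^ n = 1] (mod int p)" and c: "[int (minus_three_halves p) ^ n = 1] (mod int p)"
    and a: "a \<in> {-1, 1, 2, 3}"
  shows "[a ^ n = 1] (mod int p)"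
proof -
  let ?c = "int (minus_three_halves p)"
  have "[3 ^ n = (-1 * 2 * ?c) ^ n] (mod int p)"
    using three_cong_minus_three_halves[OF assms(1,2)] by (rule cong_pow)
  also have "(-1 * 2 * ?c) ^ n = 2 ^ n * ?c ^ n" using assms(3) by (simp add: power_mult_distrib)
  also have "[2 ^ n * ?c ^ n = 1 * 1] (mod int p)" using two c by (rule cong_mult)
  finally have "[3 ^ n = 1] (mod int p)" by simp
  then show ?thesis using a two assms(3) by auto
qed

fun mult_mod :: "nat \<Rightarrow> int \<times> int \<Rightarrow> int" where
  "mult_mod p (a, b) = a * b mod int p"

lemma perfect_B_m1_3_bij:
  assumes "p > 1" "perfect_B_m1_3 p B"
  shows "B \<subseteq> {1..<int p}" and "bij_betw (mult_mod p) ({-1, 1, 2, 3} \<times> B) {1..<int p}"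
proof -
  have B: "B \<subseteq> {0..<int p}"
    and ex1: "\<And>x. x \<in> {1..<int p} \<Longrightarrow>
      \<exists>!ab. fst ab \<in> {-1, 1, 2, 3} \<and> snd ab \<in> B \<and> [fst ab * snd ab = x] (mod int p)"
    and nz: "\<And>a b. a \<in> {-1, 1, 2, 3} \<Longrightarrow> b \<in> B \<Longrightarrow> \<not> [a * b = 0] (mod int p)"
    using assms(2) unfolding perfect_B_m1_3_def by blast+
  have range: "mult_mod p ab \<in> {1..<int p}" if "ab \<in> {-1, 1, 2, 3} \<times> B" for ab
    using mod_mem_nonzero_residues[of p "fst ab * snd ab"] nz[of "fst ab" "snd ab"] that assms(1)
    by (cases ab) (simp add: cong_0_iff)
  show "B \<subseteq> {1..<int p}"
  proof
    fix b assume "b \<in> B"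
    then show "b \<in> {1..<int p}" using range[of "(1, b)"] B by auto
  qed
  show "bij_betw (mult_mod p) ({-1, 1, 2, 3} \<times> B) {1..<int p}"
    unfolding bij_betw_def
  proof (intro conjI subsetI inj_onI equalityI)
    fix ab ab' assume ab: "ab \<in> {-1, 1, 2, 3} \<times> B" "ab' \<in> {-1, 1, 2, 3} \<times> B"
      and eq: "mult_mod p ab = mult_mod p ab'"
    have "fst ab \<in> {-1, 1, 2, 3} \<and> snd ab \<in> B \<and> [fst ab * snd ab = mult_mod p ab] (mod int p)"
      "fst ab' \<in> {-1, 1, 2, 3} \<and> snd ab' \<in> B \<and> [fst ab' * snd ab' = mult_mod p ab] (mod int p)"
      using ab eq by (cases ab, cases ab', simp add: cong_def)+
    then show "ab = ab'" using ex1[OF range[OF ab(1)]] by blast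
  next
    fix x assume "x \<in> mult_mod p ` ({-1, 1, 2, 3} \<times> B)"
    then show "x \<in> {1..<int p}" using range by blast
  next
    fix x assume x: "x \<in> {1..<int p}"
    then obtain ab where "fst ab \<in> {-1, 1, 2, 3} \<and> snd ab \<in> B \<and> [fst ab * snd ab = x] (mod int p)"
      using ex1_implies_ex[OF ex1[OF x]] by blast
    then have ab: "ab \<in> {-1, 1, 2, 3} \<times> B" "[fst ab * snd ab = x] (mod int p)"
      by (simp_all add: mem_Times_iff)
    then have "mult_mod p ab = x" using x by (cases ab) (simp add: cong_def)
    then show "x \<in> mult_mod p ` ({-1, 1, 2, 3} \<times> B)" using ab(1) by blast
  qed
qed

lemma perfect_B_m1_3_if_bij:
  assumes B: "B \<subseteq> {1..<int p}" and bij: "bij_betw (mult_mod p) ({-1, 1, 2, 3} \<times> B) {1..<int p}"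
  shows "perfect_B_m1_3 p B"
  unfolding perfect_B_m1_3_def
proof (intro conjI ballI)
  have inj: "inj_on (mult_mod p) ({-1, 1, 2, 3} \<times> B)"
    and img: "mult_mod p ` ({-1, 1, 2, 3} \<times> B) = {1..<int p}"
    using bij unfolding bij_betw_def by blast+
  have eq_iff: "mult_mod p ab = x \<longleftrightarrow> [fst ab * snd ab = x] (mod int p)"
    if "x \<in> {1..<int p}" for ab x
    using that by (cases ab) (simp add: cong_def)
  show "B \<subseteq> {0..<int p}" using B by auto
  show "\<not> [a * b = 0] (mod int p)" if "a \<in> {-1, 1, 2, 3 :: int}" "b \<in> B" for a b
  proof -
    have "mult_mod p (a, b) \<in> mult_mod p ` ({-1, 1, 2, 3} \<times> B)" using that by (intro imageI) simp
    then have "mult_mod p (a, b) \<in> {1..<int p}" unfolding img .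
    then show ?thesis by (simp add: cong_def)
  qed
  fix x assume x: "x \<in> {1..<int p}"
  then have "x \<in> mult_mod p ` ({-1, 1, 2, 3} \<times> B)" unfolding img .
  then obtain ab where ab: "ab \<in> {-1, 1, 2, 3} \<times> B" "mult_mod p ab = x" by (rule imageE) simp
  show "\<exists>!ab. fst ab \<in> {-1, 1, 2, 3} \<and> snd ab \<in> B \<and> [fst ab * snd ab = x] (mod int p)"
  proof (rule ex1I[of _ ab])
    show "fst ab \<in> {-1, 1, 2, 3} \<and> snd ab \<in> B \<and> [fst ab * snd ab = x] (mod int p)"
      using ab eq_iff[OF x] by (simp add: mem_Times_iff)
  next
    fix ab' assume ab': "fst ab' \<in> {-1, 1, 2, 3} \<and> snd ab' \<in> B \<and> [fst ab' * snd ab' = x] (mod int p)"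
    then have "mult_mod p ab' = x" using eq_iff[OF x] by blast
    then have "mult_mod p ab' = mult_mod p ab" using ab(2) by simp
    moreover have "ab' \<in> {-1, 1, 2, 3} \<times> B" using ab' by (simp add: mem_Times_iff)
    ultimately show "ab' = ab" using inj ab(1) by (blast dest: inj_onD)
  qed
qed

lemma perfect_B_m1_3_cong_imp_eq:
  assumes "p > 1" "perfect_B_m1_3 p B"
    and "a \<in> {-1, 1, 2, 3}" "a' \<in> {-1, 1, 2, 3}" "b \<in> B" "b' \<in> B"
    and "[a * b = a' * b'] (mod int p)"
  shows "a = a' \<and> b = b'"
proof -
  have "inj_on (mult_mod p) ({-1, 1, 2, 3} \<times> B)"
    using perfect_B_m1_3_bij(2)[OF assms(1,2)] unfolding bij_betw_def by blast
  moreover have "mult_mod p (a, b) = mult_mod p (a', b')" using assms(7) by (simp add: cong_def)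
  moreover have "(a, b) \<in> {-1, 1, 2, 3} \<times> B" "(a', b') \<in> {-1, 1, 2, 3} \<times> B"
    using assms(3-6) by simp_all
  ultimately have "(a, b) = (a', b')" by (blast dest: inj_onD)
  then show ?thesis by simp
qed

lemma perfect_B_m1_3_card_inter:
  assumes "p > 1" "perfect_B_m1_3 p B" "D \<subseteq> {1..<int p}"
    and invariant: "\<And>a x. a \<in> {-1, 1, 2, 3} \<Longrightarrow> x \<in> {1..<int p} \<Longrightarrow> a * x mod int p \<in> D \<longleftrightarrow> x \<in> D"
  shows "card D = 4 * card (B \<inter> D)"
proof -
  have B: "B \<subseteq> {1..<int p}" and bij: "bij_betw (mult_mod p) ({-1, 1, 2, 3} \<times> B) {1..<int p}"
    by (rule perfect_B_m1_3_bij[OF assms(1,2)])+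
  have "mult_mod p ` ({-1, 1, 2, 3} \<times> (B \<inter> D)) = D"
  proof (intro equalityI subsetI)
    fix y assume "y \<in> mult_mod p ` ({-1, 1, 2, 3} \<times> (B \<inter> D))"
    then obtain a b where ab: "a \<in> {-1, 1, 2, 3}" "b \<in> B \<inter> D" "y = mult_mod p (a, b)" by blast
    moreover have "b \<in> {1..<int p}" using ab(2) B by blast
    ultimately show "y \<in> D" using invariant[of a b] by simp
  next
    fix y assume y: "y \<in> D"
    then have "y \<in> mult_mod p ` ({-1, 1, 2, 3} \<times> B)" using assms(3) bij by (auto simp: bij_betw_def)
    then obtain a b where ab: "a \<in> {-1, 1, 2, 3}" "b \<in> B" "y = mult_mod p (a, b)" by blast
    moreover have "b \<in> {1..<int p}" using ab(2) B by blast
    ultimately have "b \<in> D" using invariant[of a b] y by simp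
    then show "y \<in> mult_mod p ` ({-1, 1, 2, 3} \<times> (B \<inter> D))" using ab by blast
  qed
  moreover have "{-1, 1, 2, 3 :: int} \<times> (B \<inter> D) \<subseteq> {-1, 1, 2, 3} \<times> B" by blast
  ultimately have "bij_betw (mult_mod p) ({-1, 1, 2, 3} \<times> (B \<inter> D)) D"
    using bij_betw_subset[OF bij] by blast
  then have "card D = card ({-1, 1, 2, 3 :: int} \<times> (B \<inter> D))" by (simp add: bij_betw_same_card)
  then show ?thesis by (simp add: card_cartesian_product)
qed

lemma perfect_B_m1_3_nonempty:
  assumes "p > 1" "perfect_B_m1_3 p B"
  obtains b where "b \<in> B"
proof -
  have "1 \<in> mult_mod p ` ({-1, 1, 2, 3} \<times> B)"
    using perfect_B_m1_3_bij(2)[OF assms] assms(1) by (simp add: bij_betw_def)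
  then show ?thesis using that by blast
qed

lemma perfect_B_m1_3_cong_minus_three_imp_two:
  assumes "prime p" "p > 3" "perfect_B_m1_3 p B"
    and a: "a \<in> {-1, 1, 2, 3}" and b: "b \<in> B" "b' \<in> B" and ab: "[a * b' = -3 * b] (mod int p)"
  shows "a = 2"
proof -
  have p1: "p > 1" using assms(2) by simp
  have unique: "a1 = a2" if "a1 \<in> {-1, 1, 2, 3}" "a2 \<in> {-1, 1, 2, 3}" "[a1 * b' = a2 * b] (mod int p)"
    for a1 a2
    using perfect_B_m1_3_cong_imp_eq[OF p1 assms(3) that(1,2) b(2,1) that(3)] by simp
  consider "a = -1" | "a = 1" | "a = 2" | "a = 3" using a by auto
  then show ?thesis
  proof cases
    case 1
    then have "[-1 * b' = -3 * b] (mod int p)" using ab by simp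
    then have "[1 * b' = 3 * b] (mod int p)" by (metis cong_minus_minus_iff mult_minus_left)
    then show ?thesis using unique[of 1 3] by simp
  next
    case 2
    then have "[1 * b' = -3 * b] (mod int p)" using ab by simp
    then have "[-1 * b' = 3 * b] (mod int p)" by (metis cong_minus_minus_iff mult_minus_left minus_minus)
    then show ?thesis using unique[of "-1" 3] by simp
  next
    case 4
    have "coprime 3 (int p)"
      using multiplier_not_dvd[OF assms(2), of 3] assms(1) prime_imp_coprime[of "int p" 3]
      by (simp add: coprime_commute)
    moreover have "[3 * b' = 3 * (-1 * b)] (mod int p)" using ab 4 by simp
    ultimately have "[1 * b' = -1 * b] (mod int p)" using cong_mult_lcancel[of 3 "int p" b' "-1 * b"] by simp
    then show ?thesis using unique[of 1 "-1"] by simp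
  qed
qed

lemma perfect_B_m1_3_mult_minus_three_halves:
  assumes "prime p" "p > 3" "perfect_B_m1_3 p B" "b \<in> B"
  shows "int (minus_three_halves p) * b mod int p \<in> B"
proof -
  define c where "c = int (minus_three_halves p)"
  have p: "p > 1" "odd p" "p \<ge> 3" using assms(1,2) prime_odd_nat by auto
  have B: "B \<subseteq> {1..<int p}" and bij: "bij_betw (mult_mod p) ({-1, 1, 2, 3} \<times> B) {1..<int p}"
    by (rule perfect_B_m1_3_bij[OF p(1) assms(3)])+
  have "-3 * b mod int p \<in> {1..<int p}"
    using mult_mod_mem_nonzero_residues[OF assms(1), of "-3" b] multiplier_not_dvd[OF assms(2), of 3]
      B assms(4) by auto
  then have "-3 * b mod int p \<in> mult_mod p ` ({-1, 1, 2, 3} \<times> B)"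
    using bij by (simp add: bij_betw_def)
  then obtain ab where ab: "ab \<in> {-1, 1, 2, 3} \<times> B" "mult_mod p ab = -3 * b mod int p"
    by (rule imageE) simp
  obtain a b' where "ab = (a, b')" by (cases ab)
  then have ab': "a \<in> {-1, 1, 2, 3}" "b' \<in> B" "[a * b' = -3 * b] (mod int p)"
    using ab by (simp_all add: cong_def)
  then have "a = 2" using perfect_B_m1_3_cong_minus_three_imp_two[OF assms(1-3) _ assms(4)] by blast
  have "[-3 * b = 2 * c * b] (mod int p)"
    using cong_mult[OF minus_three_halves_cong[OF p(2,3)] cong_refl[of b]] unfolding c_def
    by (simp add: cong_sym)
  then have "[2 * b' = 2 * (c * b)] (mod int p)"
    using ab'(3) \<open>a = 2\<close> cong_trans by (simp add: mult.assoc) blast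
  then have "[b' = c * b] (mod int p)" by (simp add: cong_mult_lcancel p(2))
  then have "b' = c * b mod int p" using B ab'(2) by (auto simp: cong_def)
  then show ?thesis using ab'(2) unfolding c_def by simp
qed

lemma perfect_B_m1_3_mult_pow_minus_three_halves:
  assumes "prime p" "p > 3" "perfect_B_m1_3 p B" "b \<in> B"
  shows "int (minus_three_halves p) ^ k * b mod int p \<in> B"
proof (induction k)
  case 0
  have "B \<subseteq> {1..<int p}" using perfect_B_m1_3_bij(1)[of p B] assms(2,3) by simp
  then show ?case using assms(4) by auto
next
  case (Suc k)
  let ?c = "int (minus_three_halves p)"
  have "?c ^ Suc k * b mod int p = ?c * (?c ^ k * b mod int p) mod int p"
    by (simp add: mod_mult_right_eq mult.assoc)
  then show ?case using perfect_B_m1_3_mult_minus_three_halves[OF assms(1-3) Suc.IH] by simp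
qed

lemma perfect_B_m1_3_odd_ord:
  assumes "prime p" "p > 3" "perfect_B_m1_3 p B"
  shows "odd (ord p (minus_three_halves p))"
proof
  define c where "c = minus_three_halves p"
  assume "even (ord p c)"
  then obtain q where q: "ord p c = 2 * q" ..
  have "odd p" using assms(1,2) prime_odd_nat by auto
  then have cop: "coprime p c"
    using assms minus_three_halves_not_dvd prime_imp_coprime_nat unfolding c_def by blast
  then have "c > 0" using assms(2) by (cases c) auto
  have "q > 0" using q cop by (auto simp: ord_eq_0 intro!: gr0I)
  then have "\<not> [c ^ q = 1] (mod p)" using q by (intro ord_minimal) auto
  then have not1: "\<not> [int c ^ q = 1] (mod int p)" by (simp add: cong_of_nat_pow_eq_1_iff)
  have "[int c ^ (2 * q) = 1] (mod int p)" using ord[of c p] q by (simp add: cong_of_nat_pow_eq_1_iff)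
  then have "[int c ^ q * int c ^ q = 1] (mod int p)" by (simp add: mult_2 power_add)
  then have minus1: "[int c ^ q = -1] (mod int p)"
    using not1 cong_square[of "int p" "int c ^ q"] assms(1) \<open>c > 0\<close> by auto
  obtain b where b: "b \<in> B" using perfect_B_m1_3_nonempty[of p B] assms(2,3) by auto
  have "int c ^ q * b mod int p \<in> B"
    using perfect_B_m1_3_mult_pow_minus_three_halves[OF assms b] unfolding c_def .
  moreover have "[1 * (int c ^ q * b mod int p) = -1 * b] (mod int p)"
    using cong_mult[OF minus1 cong_refl[of b]] by (simp add: cong_def)
  ultimately have "1 = (-1 :: int)"
    using perfect_B_m1_3_cong_imp_eq[of p B 1 "-1" "int c ^ q * b mod int p" b] assms(2,3) b
    by simp
  then show False by simp
qed

lemma perfect_B_m1_3_4_dvd_ord_2: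
  assumes "prime p" "p > 3" "perfect_B_m1_3 p B"
  shows "4 dvd ord p 2"
proof (rule ccontr)
  assume not4: "\<not> 4 dvd ord p 2"
  define c where "c = minus_three_halves p"
  have p: "odd p" "p \<ge> 3" "p > 1" using assms(1,2) prime_odd_nat by auto
  obtain e m where pm: "p - 1 = 2 ^ e * m" "odd m"
    using pow2_times_odd_decomp[of "p - 1"] p(3) by auto
  have "even (p - 1)" using p(1,3) by presburger
  then obtain e' where "e = Suc e'" using pm by (cases e) auto
  then have dvd: "2 * m dvd p - 1" using pm(1) by simp
  have "\<not> p dvd 2" using p(2) by (auto dest: dvd_imp_le)
  then have "ord p 2 dvd 2 ^ e * m" using ord_dvd_prime_minus_1[OF assms(1)] pm(1) by simp
  then have "ord p 2 dvd 2 * m" using dvd_pow2_times_odd_imp_dvd_double[OF pm(2) _ not4] by blast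
  then have two: "[2 ^ (2 * m) = 1] (mod int p)"
    using cong_of_nat_pow_eq_1_iff[of 2] by (simp add: ord_divides')
  have "\<not> p dvd c" unfolding c_def using p(1) assms(2) by (rule minus_three_halves_not_dvd)
  then have "ord p c dvd m"
    using ord_dvd_odd_part[OF assms(1) _ pm(1)] perfect_B_m1_3_odd_ord[OF assms] unfolding c_def by blast
  then have "ord p c dvd 2 * m" by simp
  then have "[int c ^ (2 * m) = 1] (mod int p)" by (simp add: cong_of_nat_pow_eq_1_iff ord_divides')
  then have roots: "[a ^ (2 * m) = 1] (mod int p)" if "a \<in> {-1, 1, 2, 3}" for a :: int
    using multiplier_pow_eq_1[OF p(1,2) _ two _ that] unfolding c_def by simp
  define D where "D = {x \<in> {1..<int p}. [x ^ (2 * m) = 1] (mod int p)}"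
  obtain g where g: "residue_primroot p g" using prime_primitive_root_exists[OF _ assms(1)] p by auto
  have "card D = 2 * m" unfolding D_def using dvd by (rule card_roots_of_unity[OF assms(1) g])
  also have "card D = 4 * card (B \<inter> D)"
  proof (rule perfect_B_m1_3_card_inter[OF p(3) assms(3)])
    show "D \<subseteq> {1..<int p}" unfolding D_def by blast
  next
    fix a x :: int assume a: "a \<in> {-1, 1, 2, 3}" and x: "x \<in> {1..<int p}"
    have "a * x mod int p \<in> {1..<int p}"
      using mult_mod_mem_nonzero_residues[OF assms(1) multiplier_not_dvd[OF assms(2) a] x] .
    then show "a * x mod int p \<in> D \<longleftrightarrow> x \<in> D"
      unfolding D_def using x roots_of_unity_mult_mod_iff[OF roots[OF a]] by simp
  qed
  finally have "even m" by presburger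
  then show False using pm(2) by simp
qed

section \<open>Perfect sets from tilings of exponents\<close>

locale multiplier_log_tiling =
  fixes p g :: nat and \<alpha> :: "int \<Rightarrow> nat" and P :: "int \<Rightarrow> bool"
  assumes prime: "prime p" and gt_4: "p > 4" and primroot: "residue_primroot p g"
    and log: "\<And>a. a \<in> {-1, 1, 2, 3} \<Longrightarrow> [int g ^ \<alpha> a = a] (mod int p)"
    and P_cong: "\<And>i j. [i = j] (mod int (p - 1)) \<Longrightarrow> P i \<longleftrightarrow> P j"
    and tile: "\<And>K. \<exists>!d \<in> (\<lambda>a. int (\<alpha> a)) ` {-1, 1, 2, 3}. P (K - d)"
begin

definition B :: "int set" where
  "B = {y \<in> {1..<int p}. \<exists>k. [int g ^ k = y] (mod int p) \<and> P (int k)}"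

lemma log_mult:
  assumes "a \<in> {-1, 1, 2, 3}" "[int g ^ k = y] (mod int p)"
  shows "[a * y = int g ^ (\<alpha> a + k)] (mod int p)"
  using cong_mult[OF log[OF assms(1)] assms(2)] by (simp add: power_add cong_sym)

lemma inj_on_mult_mod: "inj_on (mult_mod p) ({-1, 1, 2, 3} \<times> B)"
proof
  fix ab ab' assume ab: "ab \<in> {-1, 1, 2, 3} \<times> B" and ab': "ab' \<in> {-1, 1, 2, 3} \<times> B"
    and eq: "mult_mod p ab = mult_mod p ab'"
  obtain a b where ab_eq: "ab = (a, b)" by (cases ab)
  obtain a' b' where ab'_eq: "ab' = (a', b')" by (cases ab')
  have a: "a \<in> {-1, 1, 2, 3}" "b \<in> B" and a': "a' \<in> {-1, 1, 2, 3}" "b' \<in> B"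
    using ab ab' unfolding ab_eq ab'_eq by simp_all
  obtain k where k: "[int g ^ k = b] (mod int p)" "P (int k)" using a(2) unfolding B_def by blast
  obtain k' where k': "[int g ^ k' = b'] (mod int p)" "P (int k')" using a'(2) unfolding B_def by blast
  have ab_cong: "[a * b = a' * b'] (mod int p)" using eq unfolding ab_eq ab'_eq by (simp add: cong_def)
  have "[int g ^ (\<alpha> a + k) = a * b] (mod int p)" using log_mult[OF a(1) k(1)] by (rule cong_sym)
  also note ab_cong
  also have "[a' * b' = int g ^ (\<alpha> a' + k')] (mod int p)" by (rule log_mult[OF a'(1) k'(1)])
  finally have "[int (\<alpha> a + k) = int (\<alpha> a' + k')] (mod int (p - 1))"
    using primroot_pow_cong_iff[OF prime primroot] cong_int_iff by blast
  then have "P (int (\<alpha> a + k) - int (\<alpha> a'))"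
    using P_cong[of "int (\<alpha> a + k) - int (\<alpha> a')" "int k'"] k'(2)
    by (simp add: cong_iff_dvd_diff algebra_simps)
  moreover have "P (int (\<alpha> a + k) - int (\<alpha> a))" using k(2) by simp
  ultimately have "int (\<alpha> a) = int (\<alpha> a')" using tile[of "int (\<alpha> a + k)"] a(1) a'(1) by blast
  then have "\<alpha> a = \<alpha> a'" by simp
  have "[a = int g ^ \<alpha> a] (mod int p)" using log[OF a(1)] by (rule cong_sym)
  also have "[int g ^ \<alpha> a = a'] (mod int p)" using log[OF a'(1)] \<open>\<alpha> a = \<alpha> a'\<close> by simp
  finally have "a = a'" using multiplier_cong_imp_eq[OF gt_4 a(1) a'(1)] by blast
  have "coprime a (int p)"
    using multiplier_not_dvd[of p a] gt_4 a(1) prime prime_imp_coprime[of "int p" a]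
    by (simp add: coprime_commute)
  then have "[b = b'] (mod int p)" using ab_cong \<open>a = a'\<close> by (simp add: cong_mult_lcancel)
  then have "b = b'" using a(2) a'(2) unfolding B_def by (auto simp: cong_def)
  then show "ab = ab'" unfolding ab_eq ab'_eq using \<open>a = a'\<close> by simp
qed

lemma image_mult_mod: "mult_mod p ` ({-1, 1, 2, 3} \<times> B) = {1..<int p}"
proof (intro equalityI subsetI)
  fix x assume "x \<in> mult_mod p ` ({-1, 1, 2, 3} \<times> B)"
  then obtain ab where ab: "ab \<in> {-1, 1, 2, 3} \<times> B" "x = mult_mod p ab" by (rule imageE) simp
  obtain a b where "ab = (a, b)" by (cases ab)
  then show "x \<in> {1..<int p}"
    using ab mult_mod_mem_nonzero_residues[OF prime multiplier_not_dvd, of a b] gt_4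
    unfolding B_def by auto
next
  fix x assume x: "x \<in> {1..<int p}"
  have p1: "p > 1" using gt_4 by simp
  from x have "\<not> int p dvd x" by (auto simp: zdvd_not_zless)
  then obtain K where K: "[int g ^ K = x] (mod int p)" using primroot_log_exists[OF prime primroot] by blast
  obtain a where a: "a \<in> {-1, 1, 2, 3}" "P (int K - int (\<alpha> a))" using tile[of "int K"] by blast
  define k where "k = nat ((int K - int (\<alpha> a)) mod int (p - 1))"
  have "int k = (int K - int (\<alpha> a)) mod int (p - 1)" unfolding k_def using p1 by simp
  then have k_cong: "[int k = int K - int (\<alpha> a)] (mod int (p - 1))" by (simp add: cong_def)
  then have "P (int k)" using P_cong a(2) by blast
  define b where "b = int g ^ k mod int p"
  have "b \<in> {1..<int p}"
    unfolding b_def using mod_mem_nonzero_residues p1 primroot_pow_not_dvd[OF prime primroot] by simp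
  then have b: "b \<in> B" unfolding B_def b_def using \<open>P (int k)\<close> by (auto simp: cong_def)
  have "[int (\<alpha> a + k) = int K] (mod int (p - 1))"
    using k_cong by (simp add: cong_iff_dvd_diff algebra_simps)
  then have gK: "[int g ^ (\<alpha> a + k) = int g ^ K] (mod int p)"
    using primroot_pow_cong_iff[OF prime primroot] cong_int_iff by blast
  have "[a * b = int g ^ (\<alpha> a + k)] (mod int p)"
    using log_mult[OF a(1), of k b] unfolding b_def by (simp add: cong_def)
  also note gK
  also note K
  finally have "x = mult_mod p (a, b)" using x by (simp add: cong_def)
  moreover have "(a, b) \<in> {-1, 1, 2, 3} \<times> B" using a(1) b by simp
  ultimately show "x \<in> mult_mod p ` ({-1, 1, 2, 3} \<times> B)" by (rule image_eqI)
qed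

lemma perfect: "perfect_B_m1_3 p B"
proof (rule perfect_B_m1_3_if_bij)
  show "B \<subseteq> {1..<int p}" unfolding B_def by blast
  show "bij_betw (mult_mod p) ({-1, 1, 2, 3} \<times> B) {1..<int p}"
    unfolding bij_betw_def using inj_on_mult_mod image_mult_mod by blast
qed

end

lemma primroot_logs_two_and_minus_three_halves:
  assumes p: "prime p" "p > 3" and g: "residue_primroot p g"
    and pm: "p - 1 = 2 ^ Suc l * m" "odd m"
    and ord_c: "odd (ord p (minus_three_halves p))" and ord_2: "4 dvd ord p 2"
  obtains s u v where "s < l" "odd u" "[int g ^ (2 ^ s * u) = 2] (mod int p)"
    "[int g ^ (2 ^ Suc l * v) = int (minus_three_halves p)] (mod int p)"
proof -
  have "odd p" using p prime_odd_nat by auto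
  then have "p > 4" using p(2) by presburger
  have "\<not> int p dvd 2" using multiplier_not_dvd[OF p(2), of 2] by simp
  then obtain \<tau> where \<tau>: "[int g ^ \<tau> = 2] (mod int p)" using primroot_log_exists[OF p(1) g] by blast
  have "\<tau> \<noteq> 0"
  proof
    assume "\<tau> = 0"
    then have "[1 = 2] (mod int p)" using \<tau> by simp
    then show False using multiplier_cong_imp_eq[OF \<open>p > 4\<close>, of 1 2] by simp
  qed
  then obtain s u where su: "\<tau> = 2 ^ s * u" "odd u" using pow2_times_odd_decomp by blast
  have "\<not> 2 ^ l dvd \<tau>"
    using primroot_log_not_dvd_if_4_dvd_ord[OF p(1) g pm, of \<tau> 2] \<tau> ord_2 by simp
  then have "s < l" unfolding su(1) by (meson dvd_mult2 le_imp_power_dvd not_less)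
  have "\<not> int p dvd int (minus_three_halves p)"
    using minus_three_halves_not_dvd[OF \<open>odd p\<close> p(2)] by simp
  then obtain \<gamma> where \<gamma>: "[int g ^ \<gamma> = int (minus_three_halves p)] (mod int p)"
    using primroot_log_exists[OF p(1) g] by blast
  then have "2 ^ Suc l dvd \<gamma>" using primroot_log_dvd_if_odd_ord[OF p(1) g pm] ord_c by blast
  then obtain v where "\<gamma> = 2 ^ Suc l * v" ..
  then show ?thesis using that \<open>s < l\<close> su \<tau> \<gamma> by blast
qed

lemma perfect_B_m1_3_exists:
  assumes p: "prime p" "p > 3"
    and ord_c: "odd (ord p (minus_three_halves p))" and ord_2: "4 dvd ord p 2"
  shows "\<exists>B. perfect_B_m1_3 p B"
proof -
  define c where "c = minus_three_halves p"
  have "odd p" using p prime_odd_nat by auto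
  then have p4: "p > 4" and p1: "p > 1" using p(2) by presburger+
  obtain g where g: "residue_primroot p g" using prime_primitive_root_exists[OF _ p(1)] p1 by auto
  obtain e m where pm: "p - 1 = 2 ^ e * m" "odd m" using pow2_times_odd_decomp[of "p - 1"] p1 by auto
  have "even (p - 1)" using \<open>odd p\<close> p1 by presburger
  then obtain l where "e = Suc l" using pm by (cases e) auto
  then have pml: "p - 1 = 2 ^ Suc l * m" using pm(1) by simp
  have minus1: "[int g ^ (2 ^ l * m) = -1] (mod int p)"
    using primroot_pow_half_cong_minus_1[OF p(1) g \<open>odd p\<close>] pml by simp
  obtain s u v where "s < l" "odd u" and two: "[int g ^ (2 ^ s * u) = 2] (mod int p)"
    and c: "[int g ^ (2 ^ Suc l * v) = int c] (mod int p)"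
    using primroot_logs_two_and_minus_three_halves[OF p g pml pm(2) ord_c ord_2] unfolding c_def .
  define \<alpha> where "\<alpha> a = (if a = 1 then 0 else if a = -1 then 2 ^ l * m
    else if a = 2 then 2 ^ s * u else 2 ^ l * m + 2 ^ s * u + 2 ^ Suc l * v)" for a :: int
  have log: "[int g ^ \<alpha> a = a] (mod int p)" if "a \<in> {-1, 1, 2, 3}" for a
  proof -
    have "[int g ^ (2 ^ l * m + 2 ^ s * u + 2 ^ Suc l * v) = -1 * 2 * int c] (mod int p)"
      using cong_mult[OF cong_mult[OF minus1 two] c] by (simp add: power_add)
    also have "[-1 * 2 * int c = 3] (mod int p)"
      using three_cong_minus_three_halves[OF \<open>odd p\<close>] p(2) unfolding c_def by (simp add: cong_sym)
    finally show ?thesis using that minus1 two unfolding \<alpha>_def by auto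
  qed
  define P where "P k \<longleftrightarrow> \<not> bit k s \<and> \<not> bit k l" for k :: int
  have P_cong: "P i \<longleftrightarrow> P j" if "[i = j] (mod int (p - 1))" for i j
  proof -
    have "2 ^ Suc l dvd int (p - 1)" unfolding pml by simp
    with that have ij: "[i = j] (mod 2 ^ Suc l)" by (rule cong_dvd_modulus)
    show ?thesis
      using bit_cong_pow2[OF ij, of s] bit_cong_pow2[OF ij, of l] \<open>s < l\<close> unfolding P_def by simp
  qed
  have img: "(\<lambda>a. int (\<alpha> a)) ` {-1, 1, 2, 3} =
      {0, 2 ^ l * int m, 2 ^ s * int u, 2 ^ s * int u + 2 ^ l * int m + 2 ^ Suc l * int v}"
    unfolding \<alpha>_def by auto
  have tile: "\<exists>!d \<in> (\<lambda>a. int (\<alpha> a)) ` {-1, 1, 2, 3}. P (K - d)" for K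
    unfolding img P_def by (rule ex1_shift_bits_clear[OF \<open>s < l\<close>]) (use \<open>odd u\<close> pm(2) in simp_all)
  interpret multiplier_log_tiling p g \<alpha> P
    by unfold_locales (fact p(1) p4 g log P_cong tile)+
  show ?thesis using perfect by blast
qed

theorem theorem4p7:
  fixes p :: nat
  assumes "prime p" and "odd p" and "[p = 1] (mod 8)"
  shows "(\<exists>B. perfect_B_m1_3 p B) \<longleftrightarrow>
           odd (ord p (minus_three_halves p)) \<and> 4 dvd ord p 2"
proof -
  have "p mod 8 = 1" using assms(3) by (simp add: cong_def)
  then have "p > 3" using prime_ge_2_nat[OF assms(1)] by presburger
  show ?thesis
  proof
    assume "\<exists>B. perfect_B_m1_3 p B"
    then obtain B where "perfect_B_m1_3 p B" ..
    then show "odd (ord p (minus_three_halves p)) \<and> 4 dvd ord p 2"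
      using perfect_B_m1_3_odd_ord perfect_B_m1_3_4_dvd_ord_2 assms(1) \<open>p > 3\<close> by simp
  next
    assume "odd (ord p (minus_three_halves p)) \<and> 4 dvd ord p 2"
    then show "\<exists>B. perfect_B_m1_3 p B" using perfect_B_m1_3_exists assms(1) \<open>p > 3\<close> by simp
  qed
qed

end
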